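(* Let $f\in{\rm elh}(\mathbb{C})$. The following are equivalent: (1) $f\notin{\rm Aut}(\mathbb{C})$; (2) $R_f({\rm elh}(\mathbb{C}))\subset{\rm elh}(\mathbb{C})\setminus{\rm Aut}(\mathbb{C})$; (3) $L_f({\rm elh}(\mathbb{C}))\subset{\rm elh}(\mathbb{C})\setminus{\rm Aut}(\mathbb{C})$.
   Context: ${\rm elh}(\mathbb{C})$ denotes the set of entire functions with nowhere vanishing derivative and derivative $1$ at $0$. ${\rm Aut}(\mathbb{C})=\{z+a\,:\,a\in\mathbb{C}\}$. For $f\in{\rm elh}(\mathbb{C})$, $R_f(g)=g\circ f$ and $L_f(g)=f\circ g$ for $g\in{\rm elh}(\mathbb{C})$. *)

theory Defs
  imports "HOL-Complex_Analysis.Complex_Analysis"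
begin

definition elh :: "(complex \<Rightarrow> complex) set" where
  "elh = {f. f holomorphic_on UNIV \<and> (\<forall>z. deriv f z \<noteq> 0) \<and> deriv f 0 = 1}"

definition Aut :: "(complex \<Rightarrow> complex) set" where
  "Aut = {(\<lambda>z. z + a) | a. True}"

definition R_op :: "(complex \<Rightarrow> complex) \<Rightarrow> (complex \<Rightarrow> complex) \<Rightarrow> (complex \<Rightarrow> complex)" where
  "R_op f g = g \<circ> f"

definition L_op :: "(complex \<Rightarrow> complex) \<Rightarrow> (complex \<Rightarrow> complex) \<Rightarrow> (complex \<Rightarrow> complex)" where
  "L_op f g = f \<circ> g"

end

theory Submission
  imports Defs "HOL-Computational_Algebra.Fundamental_Theorem_Algebra"
begin

text \<open>If one of \<open>g \<circ> f\<close>, \<open>f \<circ> g\<close> is a translation, then the inner map has a continuous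
  left inverse and is therefore proper. Proper entire functions are polynomials, and a polynomial
  whose derivative has no zeros has degree one by the fundamental theorem of algebra; with the
  normalisation \<open>f' 0 = 1\<close> it is a translation, and then so is the outer map. Conversely \<open>f\<close> itself is \<open>f \<circ> id = id \<circ> f\<close>.\<close>

lemma compact_vimage_of_continuous_left_inverse:
  fixes f :: "'a::topological_space \<Rightarrow> 'b::t2_space" and g :: "'b \<Rightarrow> 'a"
  assumes "continuous_on UNIV f" "continuous_on UNIV g"
    and "\<And>z. g (f z) = z" and "compact K"
  shows "compact {z. f z \<in> K}"
proof -
  have "closed {z. f z \<in> K}"
    using assms(1,4) by (simp add: continuous_on_closed_vimage compact_imp_closed vimage_def)
  moreover have "compact (g ` K)"
    using assms(2,4) by (auto intro: compact_continuous_image continuous_on_subset)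
  moreover have "{z. f z \<in> K} \<subseteq> g ` K"
    using assms(3) by (metis image_eqI mem_Collect_eq subsetI)
  ultimately show ?thesis
    by (metis closed_Int_compact inf.absorb_iff1)
qed

lemma degree_le_1_if_pderiv_no_roots:
  fixes p :: "complex poly"
  assumes "\<And>z. poly (pderiv p) z \<noteq> 0"
  shows "degree p \<le> 1"
proof -
  have "constant (poly (pderiv p))"
    using fundamental_theorem_of_algebra assms by blast
  then have "degree (pderiv p) = 0"
    by (simp add: constant_degree)
  then show ?thesis
    by (simp add: degree_pderiv)
qed

lemma proper_entire_regular_eq_affine:
  assumes holf: "f holomorphic_on UNIV" and deriv_nz: "\<And>z. deriv f z \<noteq> 0"
    and proper: "\<And>K. compact K \<Longrightarrow> compact {z. f z \<in> K}"
  shows "f = (\<lambda>z. f 0 + deriv f 0 * z)"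
proof -
  obtain c n where f_eq: "f = (\<lambda>z. \<Sum>i\<le>n. c i * z ^ i)"
    using proper_map_polyfun_eq[OF holf] proper by blast
  define p where "p = (\<Sum>i\<le>n. monom (c i) i)"
  have f_poly: "f = poly p"
    by (simp add: fun_eq_iff p_def f_eq poly_sum poly_monom)
  have "deriv f z = poly (pderiv p) z" for z
    unfolding f_poly by (simp add: DERIV_imp_deriv)
  then have "degree p \<le> 1"
    using deriv_nz degree_le_1_if_pderiv_no_roots by metis
  then have p_eq: "p = [:coeff p 0, coeff p 1:]"
    by (intro poly_eqI) (auto simp: coeff_pCons coeff_eq_0 split: nat.split)
  have "f = (\<lambda>z. coeff p 0 + coeff p 1 * z)"
    by (subst f_poly, subst p_eq) (simp add: fun_eq_iff)
  moreover from this have "deriv f 0 = coeff p 1"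
    by (auto intro!: DERIV_imp_deriv derivative_eq_intros)
  ultimately show ?thesis
    by simp
qed

lemma Aut_iff: "h \<in> Aut \<longleftrightarrow> (\<exists>a. \<forall>z. h z = z + a)"
  by (auto simp: Aut_def fun_eq_iff)

lemma elh_continuous: "f \<in> elh \<Longrightarrow> continuous_on UNIV f"
  by (auto simp: elh_def intro: holomorphic_on_imp_continuous_on)

lemma id_in_elh: "(\<lambda>z. z) \<in> elh"
  by (auto simp: elh_def)

lemma elh_proper_imp_Aut:
  assumes "f \<in> elh" and "\<And>K. compact K \<Longrightarrow> compact {z. f z \<in> K}"
  shows "f \<in> Aut"
proof -
  have "f holomorphic_on UNIV" "\<And>z. deriv f z \<noteq> 0" "deriv f 0 = 1"
    using assms(1) by (auto simp: elh_def)
  then have "f = (\<lambda>z. f 0 + 1 * z)"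
    using proper_entire_regular_eq_affine assms(2) by metis
  then show ?thesis
    by (metis Aut_iff add.commute mult_1)
qed

lemma elh_inner_Aut_if_comp_Aut:
  assumes "f \<in> elh" "g \<in> elh" and "g \<circ> f \<in> Aut"
  shows "f \<in> Aut"
proof -
  obtain a where left_inv: "\<And>z. g (f z) - a = z"
    using assms(3) by (auto simp: Aut_iff)
  have "continuous_on UNIV f" "continuous_on UNIV (\<lambda>w. g w - a)"
    using assms(1,2) elh_continuous by (auto intro: continuous_intros)
  then show ?thesis
    using assms(1) left_inv compact_vimage_of_continuous_left_inverse elh_proper_imp_Aut by metis
qed

lemma outer_Aut_if_comp_Aut:
  assumes "f \<circ> g \<in> Aut" and "g \<in> Aut"
  shows "f \<in> Aut"
proof -
  obtain a b where fg: "\<And>z. f (g z) = z + a" and g: "\<And>z. g z = z + b"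
    using assms unfolding Aut_iff comp_def by blast
  have "f w = w + (a - b)" for w
    using fg[of "w - b"] g[of "w - b"] by simp
  then show ?thesis
    by (auto simp: Aut_iff)
qed

theorem proposition3p11:
  assumes "f \<in> elh"
  shows "(f \<notin> Aut \<longleftrightarrow> (\<forall>g\<in>elh. R_op f g \<notin> Aut))
       \<and> (f \<notin> Aut \<longleftrightarrow> (\<forall>g\<in>elh. L_op f g \<notin> Aut))"
proof -
  have "f \<in> Aut" if "g \<in> elh" "R_op f g \<in> Aut" for g
    using assms that elh_inner_Aut_if_comp_Aut unfolding R_op_def by blast
  moreover have "f \<in> Aut" if "g \<in> elh" "L_op f g \<in> Aut" for g
    using assms that elh_inner_Aut_if_comp_Aut outer_Aut_if_comp_Aut unfolding L_op_def by blast
  moreover have "R_op f (\<lambda>z. z) = f" "L_op f (\<lambda>z. z) = f"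
    by (auto simp: R_op_def L_op_def)
  ultimately show ?thesis
    using id_in_elh by metis
qed

end
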